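(* Let $G$ be a graph without isolated vertices and $T$ a solution counting decision tree for $\varphi(G)$. Let $u$ be a node of $T$ labelled by a variable $x$ that is not forced to $1$ by $A_u$, and let $vp$ and $vn$ be the heads of the outgoing edges of $u$ labelled $x$ and $\neg x$ respectively. Let $S\subseteq V(G)$ contain a neighbour $y$ of $x$, and let $p$ be the weight of the edge $(u,vp)$. Then $p\,\alpha^{vp}(S)+(1-p)\,\alpha^{vn}(S\setminus\{y\})\leq\alpha^u(S)$.
   Context: $\varphi(G)$ is the CNF on variables $V(G)$ with clauses $(u\vee v)$ for $\{u,v\}\in E(G)$. Boolean functions are identified with their sets of satisfying assignments (sets of literals); $F|_S$ is the function on the remaining variables whose satisfying assignments are the $S'$ with $S\cup S'$ satisfying $F$; $|\cdot|$ counts satisfying assignments. Decision tree for $F$ (not constant false): root labelled by some $x\in Var(F)$; for each literal $\ell\in\{x,\neg x\}$ occurring in some satisfying assignment, an outgoing edge labelled $\ell$ whose head is a leaf if $|Var(F)|=1$ and otherwise the root of a decision tree for $F|_\ell$. A solution counting decision tree additionally gives the edge leaving node $w$ with label $\ell$ the weight $|F|_{A_w\cup\{\ell\}}|/|F|_{A_w}|$, where $A_w$ is the set of literals labelling the root-$w$ path. A variable $z$ is forced to $1$ by $A_w$ if some neighbour $z'$ of $z$ in $G$ has $\neg z'\in A_w$. $N^w(z)$ is the set of neighbours of $z$ that do not occur in $A_w$ and are not forced to $1$ by $A_w$. For $d\geq 0$, $c_d=1-2^{-(2d+1)}$, and $\alpha^w(S)=\prod_{z\in S}c_{|N^w(z)|}$.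 *)

theory Defs
  imports Complex_Main
begin

text \<open>Graphs: a finite vertex set V and an edge set E of two-element subsets of V.
  Literals are pairs (z, b): (z, True) is the literal z, (z, False) is the literal not z.\<close>

definition graph :: "'v set \<Rightarrow> 'v set set \<Rightarrow> bool" where
  "graph V E \<longleftrightarrow> finite V \<and> (\<forall>e\<in>E. \<exists>u v. e = {u, v} \<and> u \<noteq> v \<and> u \<in> V \<and> v \<in> V)"

definition adj :: "'v set set \<Rightarrow> 'v \<Rightarrow> 'v \<Rightarrow> bool" where
  "adj E u v \<longleftrightarrow> u \<noteq> v \<and> {u, v} \<in> E"

definition no_isolated :: "'v set \<Rightarrow> 'v set set \<Rightarrow> bool" where
  "no_isolated V E \<longleftrightarrow> (\<forall>v\<in>V. \<exists>w. adj E v w)"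

definition lit_vars :: "('v \<times> bool) set \<Rightarrow> 'v set" where
  "lit_vars A = fst ` A"

definition sat_phi :: "'v set \<Rightarrow> 'v set set \<Rightarrow> ('v \<times> bool) set set" where
  "sat_phi V E = {L. L \<subseteq> V \<times> UNIV \<and> (\<forall>v\<in>V. ((v, True) \<in> L) \<noteq> ((v, False) \<in> L))
                    \<and> (\<forall>u v. adj E u v \<longrightarrow> (u, True) \<in> L \<or> (v, True) \<in> L)}"

definition restr_sat :: "'v set \<Rightarrow> 'v set set \<Rightarrow> ('v \<times> bool) set \<Rightarrow> ('v \<times> bool) set set" where
  "restr_sat V E A = {S'. S' \<subseteq> (V - lit_vars A) \<times> UNIV \<and> A \<union> S' \<in> sat_phi V E}"

definition cnt :: "'v set \<Rightarrow> 'v set set \<Rightarrow> ('v \<times> bool) set \<Rightarrow> nat" where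
  "cnt V E A = card (restr_sat V E A)"

text \<open>Decision trees: a node carries its variable and optional heads of the edges labelled
  x (positive) and not x (negative).\<close>
datatype 'v dtree = Leaf | Node 'v "'v dtree option" "'v dtree option"

fun is_dt :: "'v set \<Rightarrow> 'v set set \<Rightarrow> ('v \<times> bool) set \<Rightarrow> 'v dtree \<Rightarrow> bool" where
  "is_dt V E A Leaf = False"
| "is_dt V E A (Node x cp cn) =
     (0 < cnt V E A \<and> x \<in> V - lit_vars A \<and>
      (case cp of None \<Rightarrow> cnt V E (insert (x, True) A) = 0
        | Some t \<Rightarrow> 0 < cnt V E (insert (x, True) A) \<and>
             (if V - lit_vars A = {x} then t = Leaf else is_dt V E (insert (x, True) A) t)) \<and>
      (case cn of None \<Rightarrow> cnt V E (insert (x, False) A) = 0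
        | Some t \<Rightarrow> 0 < cnt V E (insert (x, False) A) \<and>
             (if V - lit_vars A = {x} then t = Leaf else is_dt V E (insert (x, False) A) t)))"

text \<open>reach T A w: w is (the subtree at) a node of T and A = A_w is the set of literals on the
  path from the root to w.\<close>
inductive reach :: "'v dtree \<Rightarrow> ('v \<times> bool) set \<Rightarrow> 'v dtree \<Rightarrow> bool" for T where
  root: "reach T {} T"
| pos: "reach T A (Node x (Some c) n) \<Longrightarrow> reach T (insert (x, True) A) c"
| neg: "reach T A (Node x p (Some c)) \<Longrightarrow> reach T (insert (x, False) A) c"

definition edge_weight :: "'v set \<Rightarrow> 'v set set \<Rightarrow> ('v \<times> bool) set \<Rightarrow> ('v \<times> bool) \<Rightarrow> real" where
  "edge_weight V E A l = real (cnt V E (insert l A)) / real (cnt V E A)"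

definition forced :: "'v set set \<Rightarrow> ('v \<times> bool) set \<Rightarrow> 'v \<Rightarrow> bool" where
  "forced E A z \<longleftrightarrow> (\<exists>z'. adj E z z' \<and> (z', False) \<in> A)"

definition Nbr :: "'v set set \<Rightarrow> ('v \<times> bool) set \<Rightarrow> 'v \<Rightarrow> 'v set" where
  "Nbr E A z = {z'. adj E z z' \<and> z' \<notin> lit_vars A \<and> \<not> forced E A z'}"

definition c_const :: "nat \<Rightarrow> real" where
  "c_const d = 1 - 2 powi (- (2 * int d + 1))"

definition alpha :: "'v set set \<Rightarrow> ('v \<times> bool) set \<Rightarrow> 'v set \<Rightarrow> real" where
  "alpha E A S = (\<Prod>z\<in>S. c_const (card (Nbr E A z)))"

end

theory Submission
  imports Defs
begin

text \<open>Since \<open>\<phi>(G)\<close> is monotone, turning \<open>x\<close> from false to true preserves satisfaction, so the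
  positive branch has at least as many solutions as the negative one and \<open>p \<ge> 1/2\<close>.
  As \<open>x\<close> is unassigned, unforced and adjacent to \<open>y\<close>, it lies in \<open>N\<^sup>u(y)\<close>, say of size \<open>k + 1\<close>;
  assigning \<open>x\<close> removes it, so the factor of \<open>y\<close> in the positive branch is at most \<open>c\<^sub>k\<close>, while
  all other factors can only shrink along an edge. It remains to note
  \<open>p c\<^sub>k + (1 - p) \<le> c\<^bsub>k+1\<^esub>\<close>, which holds for \<open>p \<ge> 1/4\<close> since \<open>1 - c\<^bsub>k+1\<^esub> = (1 - c\<^sub>k) / 4\<close>.\<close>

lemma lit_vars_insert [simp]: "lit_vars (insert l A) = insert (fst l) (lit_vars A)"
  by (simp add: lit_vars_def)

lemma finite_restr_sat: "finite V \<Longrightarrow> finite (restr_sat V E A)"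
  by (rule finite_subset[of _ "Pow (V \<times> UNIV)"]) (auto simp: restr_sat_def)

lemma not_in_lit_vars: "x \<notin> lit_vars A \<Longrightarrow> (x, b) \<notin> A"
  by (force simp: lit_vars_def)

lemma restr_sat_iff:
  "S \<in> restr_sat V E A \<longleftrightarrow> S \<subseteq> (V - lit_vars A) \<times> UNIV \<and> A \<union> S \<in> sat_phi V E"
  by (simp add: restr_sat_def)

lemma sat_phi_excl: "L \<in> sat_phi V E \<Longrightarrow> v \<in> V \<Longrightarrow> ((v, True) \<in> L) \<noteq> ((v, False) \<in> L)"
  by (simp add: sat_phi_def)

lemma insert_mem_restr_sat:
  assumes "x \<in> V" "x \<notin> lit_vars A" "S \<in> restr_sat V E (insert (x, b) A)"
  shows "insert (x, b) S \<in> restr_sat V E A"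
  using assms unfolding restr_sat_iff by auto

lemma Diff_mem_restr_sat:
  assumes "S \<in> restr_sat V E A" "(x, b) \<in> S" "(x, \<not> b) \<notin> S"
  shows "S - {(x, b)} \<in> restr_sat V E (insert (x, b) A)"
proof -
  have "insert (x, b) A \<union> (S - {(x, b)}) = A \<union> S" using assms(2) by blast
  moreover have "S - {(x, b)} \<subseteq> (V - insert x (lit_vars A)) \<times> UNIV"
  proof
    fix q assume "q \<in> S - {(x, b)}"
    moreover obtain v c where "q = (v, c)" by (cases q)
    ultimately show "q \<in> (V - insert x (lit_vars A)) \<times> UNIV"
      using assms(1,3) unfolding restr_sat_iff by (cases "v = x"; cases c; cases b) auto
  qed
  ultimately show ?thesis using assms(1) unfolding restr_sat_iff by simp
qed

lemma restr_sat_insert: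
  assumes "x \<in> V" "x \<notin> lit_vars A"
  shows "restr_sat V E A
           = insert (x, True) ` restr_sat V E (insert (x, True) A)
             \<union> insert (x, False) ` restr_sat V E (insert (x, False) A)"
    (is "_ = ?T \<union> ?F")
proof
  show "?T \<union> ?F \<subseteq> restr_sat V E A" using insert_mem_restr_sat[OF assms] by blast
  show "restr_sat V E A \<subseteq> ?T \<union> ?F"
  proof
    fix S assume S: "S \<in> restr_sat V E A"
    then have "((x, True) \<in> A \<union> S) \<noteq> ((x, False) \<in> A \<union> S)"
      using assms(1) unfolding restr_sat_iff by (blast dest: sat_phi_excl)
    then obtain b where "(x, b) \<in> S" "(x, \<not> b) \<notin> S"
      using not_in_lit_vars[OF assms(2)] by (metis (full_types) Un_iff)
    then have "S = insert (x, b) (S - {(x, b)})" "S - {(x, b)} \<in> restr_sat V E (insert (x, b) A)"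
      using Diff_mem_restr_sat[OF S] by auto
    then show "S \<in> ?T \<union> ?F" by (cases b) (metis UnI1 imageI, metis UnI2 imageI)
  qed
qed

lemma inj_on_insert_restr_sat:
  "inj_on (insert (x, b)) (restr_sat V E (insert (x, b) A))"
proof (rule inj_onI)
  fix S1 S2
  assume "S1 \<in> restr_sat V E (insert (x, b) A)" "S2 \<in> restr_sat V E (insert (x, b) A)"
    and "insert (x, b) S1 = insert (x, b) S2"
  moreover have "(x, b) \<notin> S" if "S \<in> restr_sat V E (insert (x, b) A)" for S
    using that by (auto simp: restr_sat_def)
  ultimately show "S1 = S2" by (metis insert_ident)
qed

lemma cnt_eq_sum_branches:
  assumes "finite V" "x \<in> V" "x \<notin> lit_vars A"
  shows "cnt V E A = cnt V E (insert (x, True) A) + cnt V E (insert (x, False) A)"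
proof -
  have "insert (x, True) ` restr_sat V E (insert (x, True) A)
          \<inter> insert (x, False) ` restr_sat V E (insert (x, False) A) = {}"
    by (auto simp: restr_sat_def)
  then show ?thesis
    unfolding cnt_def restr_sat_insert[OF assms(2,3)]
    by (simp add: card_Un_disjoint finite_restr_sat assms(1) card_image inj_on_insert_restr_sat)
qed

lemma restr_sat_neg_subset_pos:
  assumes "x \<in> V" "x \<notin> lit_vars A"
  shows "restr_sat V E (insert (x, False) A) \<subseteq> restr_sat V E (insert (x, True) A)"
  using assms by (auto simp: restr_sat_def sat_phi_def lit_vars_def intro: rev_image_eqI)

lemma cnt_neg_le_cnt_pos:
  assumes "finite V" "x \<in> V" "x \<notin> lit_vars A"
  shows "cnt V E (insert (x, False) A) \<le> cnt V E (insert (x, True) A)"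
  unfolding cnt_def
  by (rule card_mono[OF finite_restr_sat[OF assms(1)] restr_sat_neg_subset_pos[OF assms(2,3)]])

lemma edge_weight_pos_bounds:
  assumes "finite V" "x \<in> V" "x \<notin> lit_vars A" "0 < cnt V E A"
  shows "1/2 \<le> edge_weight V E A (x, True)" "edge_weight V E A (x, True) \<le> 1"
proof -
  define a where "a = real (cnt V E (insert (x, True) A))"
  define b where "b = real (cnt V E (insert (x, False) A))"
  have p: "edge_weight V E A (x, True) = a / (a + b)"
    unfolding edge_weight_def a_def b_def cnt_eq_sum_branches[OF assms(1-3)] by simp
  have "b \<le> a" "0 \<le> b" "0 < a + b"
    using cnt_neg_le_cnt_pos[OF assms(1-3), of E] assms(4)
    unfolding a_def b_def cnt_eq_sum_branches[OF assms(1-3)] by auto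
  then show "1/2 \<le> edge_weight V E A (x, True)" "edge_weight V E A (x, True) \<le> 1"
    unfolding p by (simp_all add: field_simps)
qed

lemma c_const_eq: "c_const d = 1 - 1 / 2 ^ (2 * d + 1)"
proof -
  have "- (2 * int d + 1) = - int (2 * d + 1)" by simp
  then have "(2::real) powi (- (2 * int d + 1)) = inverse (2 ^ (2 * d + 1))"
    by (simp only: power_int_minus power_int_of_nat)
  then show ?thesis unfolding c_const_def by (simp add: inverse_eq_divide)
qed

lemma c_const_Suc: "c_const (Suc d) = 1 - (1 - c_const d) / 4"
  by (simp add: c_const_eq)

lemma c_const_nonneg: "0 \<le> c_const d"
proof -
  have "(1::real) \<le> 2 ^ (2 * d + 1)" by (rule one_le_power) simp
  then show ?thesis unfolding c_const_eq by simp
qed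

lemma c_const_mono: "d \<le> e \<Longrightarrow> c_const d \<le> c_const e"
  by (simp add: c_const_eq frac_le power_increasing)

lemma c_const_Suc_ge:
  assumes "1/4 \<le> p"
  shows "p * c_const d + (1 - p) \<le> c_const (Suc d)"
proof -
  have "(1 - c_const d) / 4 \<le> p * (1 - c_const d)"
    using mult_right_mono[OF assms, of "1 - c_const d"] by (simp add: c_const_eq)
  then show ?thesis unfolding c_const_Suc by (simp add: algebra_simps)
qed

lemma finite_Nbr:
  assumes "graph V E"
  shows "finite (Nbr E A z)"
proof (rule finite_subset[of _ V])
  show "Nbr E A z \<subseteq> V"
  proof
    fix w assume "w \<in> Nbr E A z"
    then have "{z, w} \<in> E" by (simp add: Nbr_def adj_def)
    with assms obtain u v where "{z, w} = {u, v}" "u \<in> V" "v \<in> V" unfolding graph_def by blast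
    then show "w \<in> V" by (metis doubleton_eq_iff)
  qed
  show "finite V" using assms by (simp add: graph_def)
qed

lemma Nbr_insert_subset: "Nbr E (insert l A) z \<subseteq> Nbr E A z - {fst l}"
  by (auto simp: Nbr_def forced_def)

lemma card_Nbr_insert_le:
  "graph V E \<Longrightarrow> card (Nbr E (insert l A) z) \<le> card (Nbr E A z)"
  by (metis Diff_subset card_mono finite_Nbr Nbr_insert_subset order_trans)

lemma card_Nbr_insert_less:
  assumes "graph V E" "x \<in> Nbr E A y"
  shows "card (Nbr E (insert (x, b) A) y) < card (Nbr E A y)"
  by (rule psubset_card_mono[OF finite_Nbr[OF assms(1)]])
    (use Nbr_insert_subset[of E "(x, b)" A y] assms(2) in auto)

lemma alpha_nonneg: "0 \<le> alpha E A S"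
  unfolding alpha_def by (simp add: prod_nonneg c_const_nonneg)

lemma alpha_insert_le: "graph V E \<Longrightarrow> alpha E (insert l A) S \<le> alpha E A S"
  unfolding alpha_def by (intro prod_mono conjI c_const_nonneg c_const_mono card_Nbr_insert_le)

lemma alpha_branch_le:
  assumes "graph V E" "finite S" "y \<in> S" "x \<in> Nbr E A y" "1/4 \<le> p" "p \<le> 1"
  shows "p * alpha E (insert (x, b) A) S + (1 - p) * alpha E (insert l A) (S - {y})
           \<le> alpha E A S"
proof -
  obtain k where k: "card (Nbr E A y) = Suc k"
    using card_Nbr_insert_less[OF assms(1,4), of b] by (metis less_imp_Suc_add)
  define P where "P = alpha E A (S - {y})"
  have "c_const (card (Nbr E (insert (x, b) A) y)) \<le> c_const k"
    using card_Nbr_insert_less[OF assms(1,4), of b] k by (simp add: c_const_mono)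
  moreover have "alpha E (insert (x, b) A) S
      = c_const (card (Nbr E (insert (x, b) A) y)) * alpha E (insert (x, b) A) (S - {y})"
    unfolding alpha_def by (rule prod.remove[OF assms(2,3)])
  ultimately have "alpha E (insert (x, b) A) S \<le> c_const k * P"
    unfolding P_def by (metis mult_mono alpha_insert_le[OF assms(1)] c_const_nonneg alpha_nonneg)
  then have pos: "p * alpha E (insert (x, b) A) S \<le> p * (c_const k * P)"
    using assms(5) by (intro mult_left_mono) simp_all
  have neg: "(1 - p) * alpha E (insert l A) (S - {y}) \<le> (1 - p) * P"
    unfolding P_def using assms(6) by (intro mult_left_mono alpha_insert_le[OF assms(1)]) simp
  have "p * (c_const k * P) + (1 - p) * P = (p * c_const k + (1 - p)) * P"
    by (simp add: algebra_simps)
  also have "\<dots> \<le> c_const (Suc k) * P"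
    unfolding P_def by (intro mult_right_mono c_const_Suc_ge assms(5) alpha_nonneg)
  also have "\<dots> = alpha E A S"
    unfolding P_def alpha_def k[symmetric] by (rule prod.remove[OF assms(2,3), symmetric])
  finally show ?thesis using pos neg by linarith
qed

lemma adj_sym: "adj E x y \<Longrightarrow> adj E y x"
  unfolding adj_def by (auto simp: insert_commute)

lemma reach_is_dt: "reach T A w \<Longrightarrow> is_dt V E {} T \<Longrightarrow> w = Leaf \<or> is_dt V E A w"
proof (induction rule: reach.induct)
  case root
  then show ?case by simp
next
  case (pos A x c n)
  then have "is_dt V E A (Node x (Some c) n)" by simp
  then have "if V - lit_vars A = {x} then c = Leaf else is_dt V E (insert (x, True) A) c"
    unfolding is_dt.simps option.case by blast
  then show ?case by (simp split: if_splits)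
next
  case (neg A x p c)
  then have "is_dt V E A (Node x p (Some c))" by simp
  then have "if V - lit_vars A = {x} then c = Leaf else is_dt V E (insert (x, False) A) c"
    unfolding is_dt.simps option.case by blast
  then show ?case by (simp split: if_splits)
qed

theorem lemma14:
  fixes V :: "'v set" and E :: "'v set set" and T :: "'v dtree"
  assumes "graph V E" and "no_isolated V E"
    and "is_dt V E {} T"
    and "reach T A (Node x (Some vp) (Some vn))"
    and "\<not> forced E A x"
    and "S \<subseteq> V" and "y \<in> S" and "adj E x y"
    and "p = edge_weight V E A (x, True)"
  shows "p * alpha E (insert (x, True) A) S
           + (1 - p) * alpha E (insert (x, False) A) (S - {y}) \<le> alpha E A S"
proof -
  have "finite V" using assms(1) by (simp add: graph_def)
  have "is_dt V E A (Node x (Some vp) (Some vn))"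
    using reach_is_dt[OF assms(4,3)] by simp
  then have "0 < cnt V E A" "x \<in> V" "x \<notin> lit_vars A" by simp_all
  then have "1/2 \<le> p" "p \<le> 1"
    using edge_weight_pos_bounds[OF \<open>finite V\<close>] assms(9) by simp_all
  moreover have "x \<in> Nbr E A y"
    using assms(5,8) \<open>x \<notin> lit_vars A\<close> unfolding Nbr_def by (simp add: adj_sym)
  moreover have "finite S" using assms(6) \<open>finite V\<close> by (rule finite_subset)
  ultimately show ?thesis using alpha_branch_le[OF assms(1) _ assms(7)] by fastforce
qed

end
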